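(* $NPO(3)=6$.
   Context: All graphs are finite, simple and undirected; $A(G)$ denotes the adjacency matrix of $G$. Eigenvalues are counted with multiplicity. For a positive integer $k$, $NPO(k)$ is the smallest integer $n$ such that the adjacency matrix of every graph with at least $n$ vertices has at least $k$ nonpositive eigenvalues. *)

theory Defs
  imports "Jordan_Normal_Form.Char_Poly"
begin

text \<open>A finite simple graph on the vertex set {0..<n} is given by a symmetric,
irreflexive adjacency relation E (only its values on {0..<n} matter).\<close>
definition simple_graph :: "nat \<Rightarrow> (nat \<Rightarrow> nat \<Rightarrow> bool) \<Rightarrow> bool" where
  "simple_graph n E \<longleftrightarrow> (\<forall>i<n. \<forall>j<n. E i j = E j i) \<and> (\<forall>i<n. \<not> E i i)"

definition adj_matrix :: "nat \<Rightarrow> (nat \<Rightarrow> nat \<Rightarrow> bool) \<Rightarrow> real mat" where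
  "adj_matrix n E = mat n n (\<lambda>(i, j). if E i j then 1 else 0)"

definition num_nonpos_eigenvalues :: "real mat \<Rightarrow> nat" where
  "num_nonpos_eigenvalues A =
     (\<Sum>x \<in> {x. x \<le> 0 \<and> poly (char_poly A) x = 0}. order x (char_poly A))"

definition NPO :: "nat \<Rightarrow> nat" where
  "NPO k = (LEAST n. \<forall>m \<ge> n. \<forall>E. simple_graph m E \<longrightarrow>
                         k \<le> num_nonpos_eigenvalues (adj_matrix m E))"

end

theory Submission
  imports Defs
begin

text \<open>
  The proof is a Courant-Fischer (interlacing) argument.  We first prove the spectral theorem
  for real symmetric matrices, A = U diag(d) U^T with U orthogonal (a real eigenvector is
  obtained from a complex one, and the induction step deflates it with a Householder
  reflection).  This identifies the number of nonpositive eigenvalues with the number of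
  nonpositive d i and diagonalises the quadratic form w^T A w.  Consequently, a
  three-dimensional subspace on which the quadratic form is nonpositive forces three
  nonpositive eigenvalues, and one on which it is positive definite forces three positive ones.

  For graphs, three local configurations carry a three-dimensional nonpositive test space:
  an independent triple, a four-cycle, and a triangle plus a vertex adjacent to none of its
  vertices.  A finite check shows that every graph on six vertices contains one of them.
  For the lower bound, an explicit positive definite test space shows that the 5-cycle has
  at most two nonpositive eigenvalues.
\<close>

lemma mult_mat_vec_sum:
  fixes A :: "'a::comm_ring_1 mat"
  assumes "A \<in> carrier_mat n n" "v \<in> carrier_vec n" "i < n"
  shows "(A *\<^sub>v v) $ i = (\<Sum>j<n. A $$ (i,j) * v $ j)"
  using assms by (auto simp: scalar_prod_def atLeast0LessThan intro!: sum.cong)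

lemma scalar_prod_sum:
  assumes "w \<in> carrier_vec n"
  shows "v \<bullet> w = (\<Sum>j<n. v $ j * w $ j)"
  using assms by (auto simp: scalar_prod_def atLeast0LessThan)

subsection \<open>Real eigenvectors of symmetric matrices\<close>

lemma symmetric_form_swap:
  fixes A :: "real mat"
  assumes A: "A \<in> carrier_mat n n" and sym: "transpose_mat A = A"
    and x: "x \<in> carrier_vec n" and y: "y \<in> carrier_vec n"
  shows "x \<bullet> (A *\<^sub>v y) = y \<bullet> (A *\<^sub>v x)"
proof -
  have "x \<bullet> (A *\<^sub>v y) = (transpose_mat A *\<^sub>v y) \<bullet> x"
    using A x y sym by (simp add: comm_scalar_prod[of _ n])
  also have "\<dots> = y \<bullet> (A *\<^sub>v x)"
    by (rule transpose_vec_mult_scalar[OF A x y])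
  finally show ?thesis .
qed

lemma real_self_scalar_prod_pos:
  fixes x :: "real vec"
  assumes "x \<in> carrier_vec n" "x \<noteq> 0\<^sub>v n"
  shows "x \<bullet> x > 0"
  using conjugate_square_greater_0_vec[OF assms(1)] assms(2) by simp

lemma real_self_scalar_prod_nonneg:
  fixes x :: "real vec"
  shows "x \<bullet> x \<ge> 0"
  using conjugate_square_ge_0_vec[of x] by simp

lemma eigenvector_real_imag_parts:
  fixes A :: "real mat" and vc :: "complex vec"
  assumes A: "A \<in> carrier_mat n n" and vc: "vc \<in> carrier_vec n"
    and ev: "map_mat complex_of_real A *\<^sub>v vc = mu \<cdot>\<^sub>v vc"
  shows "A *\<^sub>v map_vec Re vc = Re mu \<cdot>\<^sub>v map_vec Re vc - Im mu \<cdot>\<^sub>v map_vec Im vc"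
    and "A *\<^sub>v map_vec Im vc = Im mu \<cdot>\<^sub>v map_vec Re vc + Re mu \<cdot>\<^sub>v map_vec Im vc"
proof -
  have row: "(\<Sum>j<n. complex_of_real (A $$ (k,j)) * vc $ j) = mu * vc $ k" if k: "k < n" for k
  proof -
    have "(map_mat complex_of_real A *\<^sub>v vc) $ k = (\<Sum>j<n. complex_of_real (A $$ (k,j)) * vc $ j)"
      using mult_mat_vec_sum[of "map_mat complex_of_real A" n vc k] A vc k by simp
    then show ?thesis using ev vc k by simp
  qed
  have re: "(A *\<^sub>v map_vec Re vc) $ k = Re (mu * vc $ k)"
    and im: "(A *\<^sub>v map_vec Im vc) $ k = Im (mu * vc $ k)" if k: "k < n" for k
  proof -
    have "(A *\<^sub>v map_vec Re vc) $ k = Re (\<Sum>j<n. complex_of_real (A $$ (k,j)) * vc $ j)"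
      using mult_mat_vec_sum[of A n "map_vec Re vc" k] A vc k by (simp add: Re_sum)
    then show "(A *\<^sub>v map_vec Re vc) $ k = Re (mu * vc $ k)" using row[OF k] by simp
    have "(A *\<^sub>v map_vec Im vc) $ k = Im (\<Sum>j<n. complex_of_real (A $$ (k,j)) * vc $ j)"
      using mult_mat_vec_sum[of A n "map_vec Im vc" k] A vc k by (simp add: Im_sum)
    then show "(A *\<^sub>v map_vec Im vc) $ k = Im (mu * vc $ k)" using row[OF k] by simp
  qed
  show "A *\<^sub>v map_vec Re vc = Re mu \<cdot>\<^sub>v map_vec Re vc - Im mu \<cdot>\<^sub>v map_vec Im vc"
    using A vc re by (intro eq_vecI) auto
  show "A *\<^sub>v map_vec Im vc = Im mu \<cdot>\<^sub>v map_vec Re vc + Re mu \<cdot>\<^sub>v map_vec Im vc"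
    using A vc im by (intro eq_vecI) (auto simp: algebra_simps)
qed

text \<open>A real symmetric matrix of positive dimension has a real eigenvector: take a complex
  eigenpair (which exists by the fundamental theorem of algebra); symmetry forces the
  imaginary part of the eigenvalue to vanish, so the real or the imaginary part of the
  eigenvector is a real eigenvector.\<close>
lemma symmetric_real_eigenvector:
  fixes A :: "real mat"
  assumes A: "A \<in> carrier_mat n n" and sym: "transpose_mat A = A" and n: "0 < n"
  shows "\<exists>l v. v \<in> carrier_vec n \<and> v \<noteq> 0\<^sub>v n \<and> A *\<^sub>v v = l \<cdot>\<^sub>v v"
proof -
  define Ac where "Ac = map_mat complex_of_real A"
  have Ac: "Ac \<in> carrier_mat n n" using A by (simp add: Ac_def)
  obtain as where cp: "char_poly Ac = (\<Prod>a\<leftarrow>as. [:- a, 1:])" and len: "length as = n"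
    using char_poly_factorized[OF Ac] by blast
  have "poly (char_poly Ac) (as ! 0) = 0"
    using len n unfolding cp poly_prod_list by (simp add: prod_list_zero_iff)
  then obtain vc where "eigenvector Ac vc (as ! 0)"
    using eigenvalue_root_char_poly[OF Ac] unfolding eigenvalue_def by blast
  then have vc: "vc \<in> carrier_vec n" "vc \<noteq> 0\<^sub>v n" "Ac *\<^sub>v vc = as ! 0 \<cdot>\<^sub>v vc"
    using Ac unfolding eigenvector_def by auto
  define x where "x = map_vec Re vc"
  define y where "y = map_vec Im vc"
  define a where "a = Re (as ! 0)"
  define b where "b = Im (as ! 0)"
  have x: "x \<in> carrier_vec n" and y: "y \<in> carrier_vec n" using vc by (auto simp: x_def y_def)
  have Ax: "A *\<^sub>v x = a \<cdot>\<^sub>v x - b \<cdot>\<^sub>v y" and Ay: "A *\<^sub>v y = b \<cdot>\<^sub>v x + a \<cdot>\<^sub>v y"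
    using eigenvector_real_imag_parts[OF A vc(1)] vc(3)
    by (simp_all add: Ac_def x_def y_def a_def b_def)
  have "b * (x \<bullet> x) + a * (x \<bullet> y) = a * (y \<bullet> x) - b * (y \<bullet> y)"
    using symmetric_form_swap[OF A sym x y] x y unfolding Ax Ay
    by (simp add: scalar_prod_add_distrib scalar_prod_minus_distrib)
  then have b0: "b * (x \<bullet> x + y \<bullet> y) = 0"
    using comm_scalar_prod[OF x y] by (simp add: algebra_simps)
  have "x \<noteq> 0\<^sub>v n \<or> y \<noteq> 0\<^sub>v n"
  proof (rule ccontr)
    assume "\<not> ?thesis"
    then have "x $ i = 0" "y $ i = 0" if "i < n" for i
      using that by auto
    then have "vc = 0\<^sub>v n"
      using vc(1) by (intro eq_vecI) (auto simp: x_def y_def complex_eq_iff)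
    with vc(2) show False by simp
  qed
  then have "x \<bullet> x + y \<bullet> y > 0"
    using real_self_scalar_prod_pos[OF x] real_self_scalar_prod_pos[OF y]
      real_self_scalar_prod_nonneg[of x] real_self_scalar_prod_nonneg[of y] by fastforce
  then have "b = 0" using b0 by simp
  then have "A *\<^sub>v x = a \<cdot>\<^sub>v x" "A *\<^sub>v y = a \<cdot>\<^sub>v y" using Ax Ay x y by auto
  then show ?thesis using x y \<open>x \<noteq> 0\<^sub>v n \<or> y \<noteq> 0\<^sub>v n\<close> by blast
qed

lemma symmetric_unit_eigenvector:
  fixes A :: "real mat"
  assumes A: "A \<in> carrier_mat n n" and sym: "transpose_mat A = A" and n: "0 < n"
  shows "\<exists>l u. u \<in> carrier_vec n \<and> u \<bullet> u = 1 \<and> A *\<^sub>v u = l \<cdot>\<^sub>v u"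
proof -
  obtain l v where v: "v \<in> carrier_vec n" "v \<noteq> 0\<^sub>v n" "A *\<^sub>v v = l \<cdot>\<^sub>v v"
    using symmetric_real_eigenvector[OF A sym n] by blast
  define u where "u = (1 / sqrt (v \<bullet> v)) \<cdot>\<^sub>v v"
  have pos: "v \<bullet> v > 0" using real_self_scalar_prod_pos[OF v(1,2)] .
  have "u \<bullet> u = 1" using v pos by (simp add: u_def)
  moreover have "A *\<^sub>v u = l \<cdot>\<^sub>v u"
    using v A by (simp add: u_def mult_mat_vec[OF A] smult_smult_assoc mult.commute)
  ultimately show ?thesis using v(1) by (intro exI[of _ l] exI[of _ u]) (simp add: u_def)
qed

lemma rank_one_involution:
  fixes w :: "nat \<Rightarrow> real" and c :: real and n :: nat
  defines "H \<equiv> mat n n (\<lambda>(i,j). (if i = j then 1 else 0) - c * w i * w j)"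
  assumes cw: "c * c * (\<Sum>k<n. w k * w k) = 2 * c"
  shows "H * H = 1\<^sub>m n"
proof (rule eq_matI)
  fix i j assume "i < dim_row (1\<^sub>m n :: real mat)" "j < dim_col (1\<^sub>m n :: real mat)"
  then have i: "i < n" and j: "j < n" by auto
  have "(H * H) $$ (i,j) = (\<Sum>k<n. H $$ (i,k) * H $$ (k,j))"
    using i j by (simp add: H_def scalar_prod_def atLeast0LessThan)
  also have "\<dots> = (\<Sum>k<n. (if i = k then 1 else 0) * (if k = j then 1 else 0)
      - (if i = k then c * w k * w j else 0) - (if k = j then c * w i * w k else 0)
      + c * c * w i * w j * (w k * w k))"
    using i j by (intro sum.cong) (auto simp: H_def algebra_simps)
  also have "\<dots> = (if i = j then 1 else 0) - c * w i * w j - c * w i * w j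
      + c * c * w i * w j * (\<Sum>k<n. w k * w k)"
    using i j by (simp add: sum.distrib sum_subtractf sum_distrib_left[symmetric]
        if_distrib[where f="\<lambda>x. x * _"] cong: if_cong)
  also have "\<dots> = (if i = j then 1 else 0) + (c * c * (\<Sum>k<n. w k * w k) - 2 * c) * (w i * w j)"
    by (simp add: algebra_simps)
  also have "\<dots> = (if i = j then 1 else 0)"
    unfolding cw by simp
  finally show "(H * H) $$ (i,j) = 1\<^sub>m n $$ (i,j)" using i j by simp
qed (auto simp: H_def)

text \<open>Householder reflection: for a unit vector u there is a symmetric involution H
  mapping the first standard basis vector to u, namely H = I - c w w^T with w = u - e_0
  and c = 1 / (1 - u_0).\<close>
lemma householder_reflection:
  fixes u :: "real vec"
  assumes u: "u \<in> carrier_vec n" and uu: "u \<bullet> u = 1"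
  shows "\<exists>H. H \<in> carrier_mat n n \<and> transpose_mat H = H \<and> H * H = 1\<^sub>m n
     \<and> H *\<^sub>v unit_vec n 0 = u"
proof -
  have n: "0 < n" using u uu by (cases n) (auto simp: scalar_prod_def)
  define w where "w = (\<lambda>k. u $ k - (if k = 0 then 1 else 0))"
  define c where "c = 1 / (1 - u $ 0)"
  define H where "H = mat n n (\<lambda>(i,j). (if i = j then 1 else 0) - c * w i * w j)"
  have H: "H \<in> carrier_mat n n" by (simp add: H_def)
  have ww: "(\<Sum>k<n. w k * w k) = 2 - 2 * u $ 0"
  proof -
    have "(\<Sum>k<n. w k * w k)
        = (\<Sum>k<n. u $ k * u $ k - 2 * (if k = 0 then u $ k else 0) + (if k = 0 then 1 else 0))"
      by (rule sum.cong) (auto simp: w_def algebra_simps)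
    also have "\<dots> = (\<Sum>k<n. u $ k * u $ k) - 2 * u $ 0 + 1"
      using n by (simp add: sum.distrib sum_subtractf sum_distrib_left[symmetric])
    also have "(\<Sum>k<n. u $ k * u $ k) = 1" using uu u by (simp add: scalar_prod_sum)
    finally show ?thesis by simp
  qed
  have "c * c * (\<Sum>k<n. w k * w k) = 2 * c"
  proof (cases "u $ 0 = 1")
    case False
    then have "c * (1 - u $ 0) = 1" by (simp add: c_def)
    moreover have "c * c * (2 - 2 * u $ 0) = 2 * c * (c * (1 - u $ 0))" by (simp add: algebra_simps)
    ultimately show ?thesis by (simp add: ww)
  qed (simp add: c_def)
  then have HH: "H * H = 1\<^sub>m n"
    unfolding H_def by (rule rank_one_involution)
  have "H $$ (i, 0) = u $ i" if i: "i < n" for i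
  proof (cases "u $ 0 = 1")
    case True
    then have "(\<Sum>k<n. w k * w k) = 0" using ww by simp
    then have "w i * w i = 0" using i by (subst (asm) sum_nonneg_eq_0_iff) auto
    then show ?thesis using i True by (auto simp: H_def c_def w_def split: if_splits)
  next
    case False
    then show ?thesis using i n by (auto simp: H_def c_def w_def field_simps)
  qed
  then have "H *\<^sub>v unit_vec n 0 = u"
    using H u n by (intro eq_vecI) (simp_all add: mult_mat_vec_sum[OF H] if_distrib[where f="\<lambda>x. _ * x"] cong: if_cong)
  moreover have "transpose_mat H = H"
    using H by (intro eq_matI) (auto simp: H_def)
  ultimately show ?thesis using H HH by blast
qed

subsection \<open>The spectral theorem\<close>

definition block_diag :: "'a::zero mat \<Rightarrow> 'a mat \<Rightarrow> 'a mat" where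
  "block_diag A D = four_block_mat A (0\<^sub>m (dim_row A) (dim_col D)) (0\<^sub>m (dim_row D) (dim_col A)) D"

lemma block_diag_carrier:
  "A \<in> carrier_mat r1 c1 \<Longrightarrow> D \<in> carrier_mat r2 c2 \<Longrightarrow> block_diag A D \<in> carrier_mat (r1 + r2) (c1 + c2)"
  by (simp add: block_diag_def)

lemma block_diag_mult:
  fixes A1 :: "'a::semiring_0 mat"
  assumes "A1 \<in> carrier_mat r1 k1" "D1 \<in> carrier_mat r2 k2" "A2 \<in> carrier_mat k1 c1" "D2 \<in> carrier_mat k2 c2"
  shows "block_diag A1 D1 * block_diag A2 D2 = block_diag (A1 * A2) (D1 * D2)"
  using assms unfolding block_diag_def
  by (subst mult_four_block_mat[of _ r1 k1 _ k2 _ r2 _ _ c1 _ c2]) auto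

lemma block_diag_transpose:
  assumes "A \<in> carrier_mat r1 c1" "D \<in> carrier_mat r2 c2"
  shows "transpose_mat (block_diag A D) = block_diag (transpose_mat A) (transpose_mat D)"
  using assms unfolding block_diag_def by (subst transpose_four_block_mat) auto

definition diagonal_of :: "nat \<Rightarrow> (nat \<Rightarrow> real) \<Rightarrow> real mat" where
  "diagonal_of n d = mat n n (\<lambda>(i,j). if i = j then d i else 0)"

lemma diagonal_of_carrier: "diagonal_of n d \<in> carrier_mat n n"
  by (simp add: diagonal_of_def)

lemma diagonal_of_Suc:
  "diagonal_of (Suc n) d = block_diag (mat 1 1 (\<lambda>_. d 0)) (diagonal_of n (\<lambda>i. d (Suc i)))"
  by (rule eq_matI) (auto simp: diagonal_of_def block_diag_def)

lemma symmetric_first_eigenvector_block: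
  fixes B :: "real mat"
  assumes B: "B \<in> carrier_mat (Suc n) (Suc n)" and sym: "transpose_mat B = B"
    and ev: "B *\<^sub>v unit_vec (Suc n) 0 = l \<cdot>\<^sub>v unit_vec (Suc n) 0"
  shows "B = block_diag (mat 1 1 (\<lambda>_. l)) (mat n n (\<lambda>(i,j). B $$ (Suc i, Suc j)))"
proof -
  have col: "B $$ (i, 0) = (if i = 0 then l else 0)" if "i < Suc n" for i
    using arg_cong[OF ev, of "\<lambda>v. v $ i"] B that by simp
  have row: "B $$ (0, j) = (if j = 0 then l else 0)" if "j < Suc n" for j
    using col[OF that] arg_cong[OF sym, of "\<lambda>M. M $$ (j, 0)"] B that by simp
  show ?thesis
    using B col row by (intro eq_matI) (auto simp: block_diag_def)
qed

lemma involution_conjugate_eigenvector: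
  fixes A H :: "'a::field mat"
  assumes H: "H \<in> carrier_mat n n" and A: "A \<in> carrier_mat n n" and HH: "H * H = 1\<^sub>m n"
    and v: "v \<in> carrier_vec n" and ev: "A *\<^sub>v (H *\<^sub>v v) = l \<cdot>\<^sub>v (H *\<^sub>v v)"
  shows "(H * A * H) *\<^sub>v v = l \<cdot>\<^sub>v v"
proof -
  have "(H * A * H) *\<^sub>v v = H *\<^sub>v (A *\<^sub>v (H *\<^sub>v v))"
    using H A v by (simp add: assoc_mult_mat_vec[of _ n n _ n])
  also have "\<dots> = l \<cdot>\<^sub>v ((H * H) *\<^sub>v v)"
    using H v by (simp add: ev mult_mat_vec[OF H] assoc_mult_mat_vec[of _ n n _ n])
  finally show ?thesis using HH v by simp
qed

lemma orthogonal_mult: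
  fixes P Q :: "'a::comm_ring_1 mat"
  assumes P: "P \<in> carrier_mat n n" and Q: "Q \<in> carrier_mat n n"
    and PP: "transpose_mat P * P = 1\<^sub>m n" and QQ: "transpose_mat Q * Q = 1\<^sub>m n"
  shows "transpose_mat (P * Q) * (P * Q) = 1\<^sub>m n"
proof -
  have "transpose_mat (P * Q) * (P * Q) = transpose_mat Q * ((transpose_mat P * P) * Q)"
    using P Q by (simp add: transpose_mult[OF P Q] assoc_mult_mat[of _ n n _ n _ n])
  then show ?thesis using Q PP QQ by simp
qed

text \<open>Deflation: conjugating a symmetric matrix by the Householder reflection that maps the
  first basis vector to a unit eigenvector splits off a 1x1 block.\<close>
lemma symmetric_deflation:
  fixes A :: "real mat"
  assumes A: "A \<in> carrier_mat (Suc n) (Suc n)" and sym: "transpose_mat A = A"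
  obtains H l B' where "H \<in> carrier_mat (Suc n) (Suc n)" "transpose_mat H = H" "H * H = 1\<^sub>m (Suc n)"
    and "B' \<in> carrier_mat n n" "transpose_mat B' = B'"
    and "H * A * H = block_diag (mat 1 1 (\<lambda>_. l)) B'"
proof -
  define e0 :: "real vec" where "e0 = unit_vec (Suc n) 0"
  obtain l u where u: "u \<in> carrier_vec (Suc n)" "u \<bullet> u = 1" "A *\<^sub>v u = l \<cdot>\<^sub>v u"
    using symmetric_unit_eigenvector[OF A sym] by blast
  obtain H where H: "H \<in> carrier_mat (Suc n) (Suc n)" and Ht: "transpose_mat H = H"
    and HH: "H * H = 1\<^sub>m (Suc n)" and He0: "H *\<^sub>v e0 = u"
    using householder_reflection[OF u(1,2)] unfolding e0_def by blast
  define B where "B = H * A * H"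
  have B: "B \<in> carrier_mat (Suc n) (Suc n)" using H A by (simp add: B_def)
  have "transpose_mat B = transpose_mat H * transpose_mat (H * A)"
    unfolding B_def using H A by (intro transpose_mult[of _ "Suc n" "Suc n"]) auto
  also have "transpose_mat (H * A) = transpose_mat A * transpose_mat H"
    using H A by (intro transpose_mult[of _ "Suc n" "Suc n"]) auto
  finally have Bt: "transpose_mat B = B" using H A by (simp add: B_def Ht sym)
  have "B *\<^sub>v e0 = l \<cdot>\<^sub>v e0"
    unfolding B_def by (rule involution_conjugate_eigenvector[OF H A HH]) (use u He0 in \<open>auto simp: e0_def\<close>)
  then have B_split: "B = block_diag (mat 1 1 (\<lambda>_. l)) (mat n n (\<lambda>(i,j). B $$ (Suc i, Suc j)))"
    by (intro symmetric_first_eigenvector_block[OF B Bt]) (simp add: e0_def)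
  have "B $$ (j, i) = B $$ (i, j)" if "i < Suc n" "j < Suc n" for i j
    using arg_cong[OF Bt, of "\<lambda>M. M $$ (i, j)"] B that by simp
  then have "transpose_mat (mat n n (\<lambda>(i,j). B $$ (Suc i, Suc j))) = mat n n (\<lambda>(i,j). B $$ (Suc i, Suc j))"
    by (auto intro!: eq_matI)
  then show ?thesis using H Ht HH B_split by (intro that) (auto simp: B_def)
qed

lemma block_diag_diagonalisation:
  fixes U' :: "real mat"
  assumes U': "U' \<in> carrier_mat n n" and U'U': "transpose_mat U' * U' = 1\<^sub>m n"
  shows "\<exists>V d. V \<in> carrier_mat (Suc n) (Suc n) \<and> transpose_mat V * V = 1\<^sub>m (Suc n)
    \<and> block_diag (mat 1 1 (\<lambda>_. l)) (U' * diagonal_of n d' * transpose_mat U')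
      = V * diagonal_of (Suc n) d * transpose_mat V"
proof (intro exI conjI)
  define V where "V = block_diag (1\<^sub>m 1) U'"
  show V: "V \<in> carrier_mat (Suc n) (Suc n)"
    using block_diag_carrier[OF one_carrier_mat[of 1] U'] by (simp add: V_def)
  have Vt: "transpose_mat V = block_diag (1\<^sub>m 1) (transpose_mat U')"
    using U' by (simp add: V_def block_diag_transpose[of _ 1 1])
  have "transpose_mat V * V = block_diag (1\<^sub>m 1 * 1\<^sub>m 1) (transpose_mat U' * U')"
    unfolding Vt unfolding V_def by (rule block_diag_mult) (use U' in auto)
  also have "\<dots> = 1\<^sub>m (Suc n)"
    using U'U' four_block_one_mat[of 1 n] by (simp add: block_diag_def)
  finally show "transpose_mat V * V = 1\<^sub>m (Suc n)" .
  have D: "diagonal_of (Suc n) (case_nat l d') = block_diag (mat 1 1 (\<lambda>_. l)) (diagonal_of n d')"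
    by (simp add: diagonal_of_Suc)
  have "V * diagonal_of (Suc n) (case_nat l d') * transpose_mat V
      = block_diag (1\<^sub>m 1 * mat 1 1 (\<lambda>_. l) * 1\<^sub>m 1) (U' * diagonal_of n d' * transpose_mat U')"
    unfolding D Vt unfolding V_def using U'
    by (simp add: block_diag_mult[of _ 1 1 _ n n _ 1 _ n] block_diag_carrier diagonal_of_def)
  then show "block_diag (mat 1 1 (\<lambda>_. l)) (U' * diagonal_of n d' * transpose_mat U')
      = V * diagonal_of (Suc n) (case_nat l d') * transpose_mat V"
    by simp
qed

theorem real_spectral_theorem:
  fixes A :: "real mat"
  assumes "A \<in> carrier_mat n n" and "transpose_mat A = A"
  shows "\<exists>U d. U \<in> carrier_mat n n \<and> transpose_mat U * U = 1\<^sub>m n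
    \<and> A = U * diagonal_of n d * transpose_mat U"
  using assms
proof (induction n arbitrary: A)
  case 0
  then show ?case by (intro exI[of _ "1\<^sub>m 0"]) (auto intro!: eq_matI)
next
  case (Suc n)
  note A = Suc.prems(1)
  obtain H l B' where H: "H \<in> carrier_mat (Suc n) (Suc n)" and Ht: "transpose_mat H = H"
    and HH: "H * H = 1\<^sub>m (Suc n)" and B': "B' \<in> carrier_mat n n" "transpose_mat B' = B'"
    and split: "H * A * H = block_diag (mat 1 1 (\<lambda>_. l)) B'"
    using symmetric_deflation[OF Suc.prems] by blast
  obtain U' d' where U': "U' \<in> carrier_mat n n" "transpose_mat U' * U' = 1\<^sub>m n"
    and B'_diag: "B' = U' * diagonal_of n d' * transpose_mat U'"
    using Suc.IH[OF B'] by blast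
  obtain V d where V: "V \<in> carrier_mat (Suc n) (Suc n)" and VV: "transpose_mat V * V = 1\<^sub>m (Suc n)"
    and HAH: "H * A * H = V * diagonal_of (Suc n) d * transpose_mat V"
    using block_diag_diagonalisation[OF U', of l d'] unfolding split B'_diag by blast
  show ?case
  proof (intro exI conjI)
    show "H * V \<in> carrier_mat (Suc n) (Suc n)" using H V by simp
    show "transpose_mat (H * V) * (H * V) = 1\<^sub>m (Suc n)"
      by (rule orthogonal_mult[OF H V _ VV]) (simp add: Ht HH)
    have "H * V * diagonal_of (Suc n) d * transpose_mat (H * V) = H * (H * A * H) * H"
      using H V diagonal_of_carrier[of "Suc n" d] by (simp add: HAH transpose_mult[OF H V] Ht
          assoc_mult_mat[of _ "Suc n" "Suc n" _ "Suc n" _ "Suc n"])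
    also have "\<dots> = (H * H) * A * (H * H)"
      using H A by (simp add: assoc_mult_mat[of _ "Suc n" "Suc n" _ "Suc n" _ "Suc n"])
    finally show "A = H * V * diagonal_of (Suc n) d * transpose_mat (H * V)"
      using A HH by simp
  qed
qed

lemma order_linear_factors:
  "order x (\<Prod>i\<leftarrow>[0..<n]. [:- d i, 1::real:]) = card {i. i < n \<and> d i = x}"
proof -
  have "order x (\<Prod>i\<leftarrow>[0..<n]. [:- d i, 1::real:]) = (\<Sum>i\<leftarrow>[0..<n]. if d i = x then 1 else 0)"
    by (subst order_prod_list) (auto simp: order_linear' comp_def)
  also have "\<dots> = (\<Sum>i<n. if d i = x then 1 else 0)"
    by (simp add: sum_list_sum_nth atLeast0LessThan)
  also have "\<dots> = card {i \<in> {..<n}. d i = x}"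
    by (subst sum.inter_filter[symmetric]) simp_all
  finally show ?thesis by simp
qed

lemma num_nonpos_eigenvalues_linear_factors:
  assumes cp: "char_poly A = (\<Prod>i\<leftarrow>[0..<n]. [:- d i, 1::real:])"
  shows "num_nonpos_eigenvalues A = card {i. i < n \<and> d i \<le> 0}"
proof -
  define R where "R = {x. x \<le> 0 \<and> poly (char_poly A) x = 0}"
  have R: "R = {x \<in> d ` {..<n}. x \<le> 0}"
    unfolding R_def cp by (auto simp: poly_prod_list prod_list_zero_iff)
  have "num_nonpos_eigenvalues A = (\<Sum>x\<in>R. card {i. i < n \<and> d i = x})"
    unfolding num_nonpos_eigenvalues_def R_def by (simp add: cp order_linear_factors)
  also have "\<dots> = card (\<Union>x\<in>R. {i. i < n \<and> d i = x})"
    by (rule card_UN_disjoint[symmetric]) (auto simp: R)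
  also have "(\<Union>x\<in>R. {i. i < n \<and> d i = x}) = {i. i < n \<and> d i \<le> 0}"
    by (auto simp: R)
  finally show ?thesis .
qed

lemma num_nonpos_eigenvalues_diagonalised:
  fixes A U :: "real mat"
  assumes U: "U \<in> carrier_mat n n" and UU: "transpose_mat U * U = 1\<^sub>m n"
    and A: "A = U * diagonal_of n d * transpose_mat U"
  shows "num_nonpos_eigenvalues A = card {i. i < n \<and> d i \<le> 0}"
proof -
  have "U * transpose_mat U = 1\<^sub>m n"
    using mat_mult_left_right_inverse[of "transpose_mat U" n U] U UU by simp
  then have "similar_mat A (diagonal_of n d)"
    unfolding similar_mat_def similar_mat_wit_def Let_def
    using A U UU diagonal_of_carrier[of n d] by (intro exI[of _ U] exI[of _ "transpose_mat U"]) auto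
  then have "char_poly A = char_poly (diagonal_of n d)"
    by (rule char_poly_similar)
  also have "\<dots> = (\<Prod>a\<leftarrow>diag_mat (diagonal_of n d). [:- a, 1:])"
    by (rule char_poly_upper_triangular[OF diagonal_of_carrier]) (simp add: upper_triangular_def diagonal_of_def)
  also have "diag_mat (diagonal_of n d) = map d [0..<n]"
    by (rule nth_equalityI) (auto simp: diag_mat_def diagonal_of_def)
  finally show ?thesis
    by (intro num_nonpos_eigenvalues_linear_factors) (simp add: comp_def)
qed

lemma diagonalised_quadratic_form:
  fixes U :: "real mat"
  assumes U: "U \<in> carrier_mat n n" and w: "w \<in> carrier_vec n"
  shows "w \<bullet> ((U * diagonal_of n d * transpose_mat U) *\<^sub>v w) = (\<Sum>i<n. d i * (col U i \<bullet> w)^2)"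
proof -
  define y where "y = transpose_mat U *\<^sub>v w"
  have y: "y \<in> carrier_vec n" using U w by (simp add: y_def)
  have Dy: "(diagonal_of n d *\<^sub>v y) $ i = d i * y $ i" if "i < n" for i
  proof -
    have "(diagonal_of n d *\<^sub>v y) $ i = (\<Sum>j<n. diagonal_of n d $$ (i,j) * y $ j)"
      by (rule mult_mat_vec_sum[OF diagonal_of_carrier y that])
    also have "\<dots> = (\<Sum>j<n. if j = i then d i * y $ j else 0)"
      using that by (intro sum.cong) (auto simp: diagonal_of_def)
    finally show ?thesis using that by simp
  qed
  have "w \<bullet> ((U * diagonal_of n d * transpose_mat U) *\<^sub>v w) = w \<bullet> (U *\<^sub>v (diagonal_of n d *\<^sub>v y))"
    using U w diagonal_of_carrier[of n d] by (simp add: y_def assoc_mult_mat_vec[of _ n n _ n])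
  also have "\<dots> = y \<bullet> (diagonal_of n d *\<^sub>v y)"
    unfolding y_def by (rule transpose_vec_mult_scalar[symmetric, OF U _ w]) (use y diagonal_of_carrier[of n d] y_def in simp)
  also have "\<dots> = (\<Sum>i<n. y $ i * (diagonal_of n d *\<^sub>v y) $ i)"
    using y diagonal_of_carrier[of n d] by (intro scalar_prod_sum) simp
  also have "\<dots> = (\<Sum>i<n. d i * y $ i ^ 2)"
    by (intro sum.cong) (simp_all add: Dy power2_eq_square)
  finally show ?thesis using U w by (simp add: y_def)
qed

lemma orthogonal_coordinates_zero:
  fixes U :: "real mat"
  assumes U: "U \<in> carrier_mat n n" and UU: "transpose_mat U * U = 1\<^sub>m n"
    and w: "w \<in> carrier_vec n" and z: "\<forall>i<n. col U i \<bullet> w = 0"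
  shows "w = 0\<^sub>v n"
proof -
  have UUt: "U * transpose_mat U = 1\<^sub>m n"
    using mat_mult_left_right_inverse[of "transpose_mat U" n U] U UU by simp
  have "transpose_mat U *\<^sub>v w = 0\<^sub>v n"
    using U w z by (intro eq_vecI) auto
  moreover have "w = U *\<^sub>v (transpose_mat U *\<^sub>v w)"
    using U w UUt by (simp add: assoc_mult_mat_vec[symmetric, of _ n n _ n])
  ultimately show ?thesis using U by auto
qed

subsection \<open>Three-dimensional test spaces\<close>

lemma nontrivial_solution_parallel:
  fixes p1 p2 p3 q1 q2 q3 :: real
  assumes p: "p1 \<noteq> 0 \<or> p2 \<noteq> 0 \<or> p3 \<noteq> 0"
    and par: "p2 * q3 = p3 * q2" "p3 * q1 = p1 * q3" "p1 * q2 = p2 * q1"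
  shows "\<exists>c1 c2 c3. \<not> (c1 = 0 \<and> c2 = 0 \<and> c3 = 0) \<and> c1 * p1 + c2 * p2 + c3 * p3 = 0
     \<and> c1 * q1 + c2 * q2 + c3 * q3 = 0"
proof (cases "p1 \<noteq> 0 \<or> p2 \<noteq> 0")
  case True
  then show ?thesis using par
    by (intro exI[of _ p2] exI[of _ "- p1"] exI[of _ 0]) (auto simp: algebra_simps)
next
  case False
  then show ?thesis using p par
    by (intro exI[of _ p3] exI[of _ 0] exI[of _ "- p1"]) (auto simp: algebra_simps)
qed

text \<open>Two homogeneous linear equations in three unknowns have a nontrivial solution: the
  cross product of the coefficient vectors, unless these are parallel.\<close>
lemma two_equations_nontrivial_solution:
  fixes p1 p2 p3 q1 q2 q3 :: real
  shows "\<exists>c1 c2 c3. \<not> (c1 = 0 \<and> c2 = 0 \<and> c3 = 0) \<and> c1 * p1 + c2 * p2 + c3 * p3 = 0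
     \<and> c1 * q1 + c2 * q2 + c3 * q3 = 0"
proof -
  define r1 where "r1 = p2 * q3 - p3 * q2"
  define r2 where "r2 = p3 * q1 - p1 * q3"
  define r3 where "r3 = p1 * q2 - p2 * q1"
  show ?thesis
  proof (cases "r1 = 0 \<and> r2 = 0 \<and> r3 = 0")
    case False
    then show ?thesis
      by (intro exI[of _ r1] exI[of _ r2] exI[of _ r3]) (auto simp: r1_def r2_def r3_def algebra_simps)
  next
    case par: True
    consider "p1 \<noteq> 0 \<or> p2 \<noteq> 0 \<or> p3 \<noteq> 0"
      | "p1 = 0 \<and> p2 = 0 \<and> p3 = 0" "q1 \<noteq> 0 \<or> q2 \<noteq> 0 \<or> q3 \<noteq> 0"
      | "p1 = 0 \<and> p2 = 0 \<and> p3 = 0 \<and> q1 = 0 \<and> q2 = 0 \<and> q3 = 0"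
      by blast
    then show ?thesis
    proof cases
      case 1
      then show ?thesis
        using par by (intro nontrivial_solution_parallel) (auto simp: r1_def r2_def r3_def)
    next
      case 2
      then show ?thesis
        using nontrivial_solution_parallel[of q1 q2 q3 p1 p2 p3] by auto
    next
      case 3
      then show ?thesis by (intro exI[of _ 1]) auto
    qed
  qed
qed

lemma card_le_2_subset_pair:
  assumes "finite C" "card C \<le> 2"
  shows "\<exists>i j. C \<subseteq> {i, j}"
proof -
  consider "card C = 0" | "card C = 1" | "card C = 2" using assms(2) by linarith
  then show ?thesis
  proof cases
    case 1 then show ?thesis using assms(1) by auto
  next
    case 2 then show ?thesis by (auto simp: card_1_singleton_iff)
  next
    case 3 then show ?thesis by (auto simp: card_2_iff)
  qed
qed

text \<open>If no nonzero vector of a three-dimensional span is orthogonal to all u i with P i,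
  then there are at least three such indices: otherwise two linear conditions on the
  three coefficients would leave a nontrivial solution.\<close>
lemma three_dim_span_orthogonality_count:
  fixes u :: "nat \<Rightarrow> real vec" and F1 F2 F3 :: "real vec"
  assumes u: "\<And>i. i < n \<Longrightarrow> u i \<in> carrier_vec N"
    and F: "F1 \<in> carrier_vec N" "F2 \<in> carrier_vec N" "F3 \<in> carrier_vec N"
    and avoid: "\<And>c1 c2 c3. \<not> (c1 = 0 \<and> c2 = 0 \<and> c3 = 0) \<Longrightarrow>
        \<forall>i<n. P i \<longrightarrow> u i \<bullet> (c1 \<cdot>\<^sub>v F1 + c2 \<cdot>\<^sub>v F2 + c3 \<cdot>\<^sub>v F3) = 0 \<Longrightarrow> False"
  shows "3 \<le> card {i. i < n \<and> P i}"
proof (rule ccontr)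
  define C where "C = {i. i < n \<and> P i}"
  assume "\<not> 3 \<le> card {i. i < n \<and> P i}"
  then have "card C \<le> 2" by (simp add: C_def)
  then obtain i j where ij: "C \<subseteq> {i, j}"
    using card_le_2_subset_pair[of C] by (auto simp: C_def)
  obtain c1 c2 c3 where c: "\<not> (c1 = 0 \<and> c2 = 0 \<and> c3 = 0)"
    "c1 * (u i \<bullet> F1) + c2 * (u i \<bullet> F2) + c3 * (u i \<bullet> F3) = 0"
    "c1 * (u j \<bullet> F1) + c2 * (u j \<bullet> F2) + c3 * (u j \<bullet> F3) = 0"
    using two_equations_nontrivial_solution by blast
  have "u k \<bullet> (c1 \<cdot>\<^sub>v F1 + c2 \<cdot>\<^sub>v F2 + c3 \<cdot>\<^sub>v F3) = 0" if "k < n" "P k" for k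
  proof -
    have "k = i \<or> k = j" using ij that by (auto simp: C_def)
    moreover have "u k \<bullet> (c1 \<cdot>\<^sub>v F1 + c2 \<cdot>\<^sub>v F2 + c3 \<cdot>\<^sub>v F3)
        = c1 * (u k \<bullet> F1) + c2 * (u k \<bullet> F2) + c3 * (u k \<bullet> F3)"
      using u[OF that(1)] F by (simp add: scalar_prod_add_distrib[of _ N])
    ultimately show ?thesis using c by auto
  qed
  then show False using avoid[OF c(1)] by blast
qed

lemma symmetric_eigen_coordinates:
  fixes A :: "real mat"
  assumes A: "A \<in> carrier_mat n n" and sym: "transpose_mat A = A"
  obtains d u where "num_nonpos_eigenvalues A = card {i. i < n \<and> d i \<le> 0}"
    and "\<And>i. i < n \<Longrightarrow> u i \<in> carrier_vec n"
    and "\<And>w. w \<in> carrier_vec n \<Longrightarrow> w \<bullet> (A *\<^sub>v w) = (\<Sum>i<n. d i * (u i \<bullet> w)^2)"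
    and "\<And>w. w \<in> carrier_vec n \<Longrightarrow> \<forall>i<n. u i \<bullet> w = 0 \<Longrightarrow> w = 0\<^sub>v n"
proof -
  obtain U d where U: "U \<in> carrier_mat n n" and UU: "transpose_mat U * U = 1\<^sub>m n"
    and A_diag: "A = U * diagonal_of n d * transpose_mat U"
    using real_spectral_theorem[OF A sym] by blast
  show ?thesis
  proof (rule that[of d "col U"])
    show "num_nonpos_eigenvalues A = card {i. i < n \<and> d i \<le> 0}"
      by (rule num_nonpos_eigenvalues_diagonalised[OF U UU A_diag])
    show "col U i \<in> carrier_vec n" if "i < n" for i using U that by simp
    show "w \<bullet> (A *\<^sub>v w) = (\<Sum>i<n. d i * (col U i \<bullet> w)^2)" if "w \<in> carrier_vec n" for w
      unfolding A_diag by (rule diagonalised_quadratic_form[OF U that])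
    show "w = 0\<^sub>v n" if "w \<in> carrier_vec n" "\<forall>i<n. col U i \<bullet> w = 0" for w
      by (rule orthogonal_coordinates_zero[OF U UU that])
  qed
qed

lemma nonpos_subspace_nonpos_eigenvalues:
  fixes A :: "real mat"
  assumes A: "A \<in> carrier_mat n n" and sym: "transpose_mat A = A"
    and F: "F1 \<in> carrier_vec n" "F2 \<in> carrier_vec n" "F3 \<in> carrier_vec n"
    and indep: "\<And>c1 c2 c3. c1 \<cdot>\<^sub>v F1 + c2 \<cdot>\<^sub>v F2 + c3 \<cdot>\<^sub>v F3 = 0\<^sub>v n \<Longrightarrow> c1 = 0 \<and> c2 = 0 \<and> c3 = 0"
    and nonpos: "\<And>c1 c2 c3. (c1 \<cdot>\<^sub>v F1 + c2 \<cdot>\<^sub>v F2 + c3 \<cdot>\<^sub>v F3) \<bullet>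
        (A *\<^sub>v (c1 \<cdot>\<^sub>v F1 + c2 \<cdot>\<^sub>v F2 + c3 \<cdot>\<^sub>v F3)) \<le> 0"
  shows "3 \<le> num_nonpos_eigenvalues A"
proof -
  obtain d u where num: "num_nonpos_eigenvalues A = card {i. i < n \<and> d i \<le> 0}"
    and u: "\<And>i. i < n \<Longrightarrow> u i \<in> carrier_vec n"
    and quad: "\<And>w. w \<in> carrier_vec n \<Longrightarrow> w \<bullet> (A *\<^sub>v w) = (\<Sum>i<n. d i * (u i \<bullet> w)^2)"
    and complete: "\<And>w. w \<in> carrier_vec n \<Longrightarrow> \<forall>i<n. u i \<bullet> w = 0 \<Longrightarrow> w = 0\<^sub>v n"
    using symmetric_eigen_coordinates[OF A sym] by blast
  have "3 \<le> card {i. i < n \<and> d i \<le> 0}"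
  proof (rule three_dim_span_orthogonality_count[OF u F])
    fix c1 c2 c3
    define w where "w = c1 \<cdot>\<^sub>v F1 + c2 \<cdot>\<^sub>v F2 + c3 \<cdot>\<^sub>v F3"
    assume "\<not> (c1 = 0 \<and> c2 = 0 \<and> c3 = 0)" and perp: "\<forall>i<n. d i \<le> 0 \<longrightarrow> u i \<bullet> w = 0"
    then have w: "w \<in> carrier_vec n" "w \<noteq> 0\<^sub>v n" using F indep by (auto simp: w_def)
    then obtain k where k: "k < n" "u k \<bullet> w \<noteq> 0" using complete by blast
    then have "d k > 0" using perp not_le by blast
    have "0 < (\<Sum>i<n. d i * (u i \<bullet> w)^2)"
    proof (rule sum_pos2[of _ k])
      show "0 < d k * (u k \<bullet> w)^2" using \<open>d k > 0\<close> k by simp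
      show "0 \<le> d i * (u i \<bullet> w)^2" if "i \<in> {..<n}" for i
        using perp that by (cases "d i \<le> 0") auto
    qed (use k in auto)
    moreover have "w \<bullet> (A *\<^sub>v w) \<le> 0" unfolding w_def by (rule nonpos)
    ultimately show False using quad[OF w(1)] by simp
  qed
  then show ?thesis using num by simp
qed

lemma pos_subspace_few_nonpos_eigenvalues:
  fixes A :: "real mat"
  assumes A: "A \<in> carrier_mat n n" and sym: "transpose_mat A = A"
    and F: "F1 \<in> carrier_vec n" "F2 \<in> carrier_vec n" "F3 \<in> carrier_vec n"
    and pos: "\<And>c1 c2 c3. \<not> (c1 = 0 \<and> c2 = 0 \<and> c3 = 0) \<Longrightarrow>
        (c1 \<cdot>\<^sub>v F1 + c2 \<cdot>\<^sub>v F2 + c3 \<cdot>\<^sub>v F3) \<bullet> (A *\<^sub>v (c1 \<cdot>\<^sub>v F1 + c2 \<cdot>\<^sub>v F2 + c3 \<cdot>\<^sub>v F3)) > 0"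
  shows "num_nonpos_eigenvalues A + 3 \<le> n"
proof -
  obtain d u where num: "num_nonpos_eigenvalues A = card {i. i < n \<and> d i \<le> 0}"
    and u: "\<And>i. i < n \<Longrightarrow> u i \<in> carrier_vec n"
    and quad: "\<And>w. w \<in> carrier_vec n \<Longrightarrow> w \<bullet> (A *\<^sub>v w) = (\<Sum>i<n. d i * (u i \<bullet> w)^2)"
    by (rule symmetric_eigen_coordinates[OF A sym]) (rule that)
  have "3 \<le> card {i. i < n \<and> \<not> d i \<le> 0}"
  proof (rule three_dim_span_orthogonality_count[OF u F])
    fix c1 c2 c3
    define w where "w = c1 \<cdot>\<^sub>v F1 + c2 \<cdot>\<^sub>v F2 + c3 \<cdot>\<^sub>v F3"
    assume c: "\<not> (c1 = 0 \<and> c2 = 0 \<and> c3 = 0)" and perp: "\<forall>i<n. \<not> d i \<le> 0 \<longrightarrow> u i \<bullet> w = 0"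
    have "(\<Sum>i<n. d i * (u i \<bullet> w)^2) \<le> 0"
    proof (rule sum_nonpos)
      show "d i * (u i \<bullet> w)^2 \<le> 0" if "i \<in> {..<n}" for i
        using perp that by (cases "d i \<le> 0") (auto simp: mult_nonpos_nonneg)
    qed
    moreover have "w \<in> carrier_vec n" using F by (simp add: w_def)
    moreover have "w \<bullet> (A *\<^sub>v w) > 0" unfolding w_def by (rule pos[OF c])
    ultimately show False using quad by simp
  qed
  moreover have "card {i. i < n \<and> d i \<le> 0} + card {i. i < n \<and> \<not> d i \<le> 0} = n"
  proof -
    have "card {i. i < n \<and> d i \<le> 0} + card {i. i < n \<and> \<not> d i \<le> 0}
        = card ({i. i < n \<and> d i \<le> 0} \<union> {i. i < n \<and> \<not> d i \<le> 0})"
      by (rule card_Un_disjoint[symmetric]) auto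
    also have "{i. i < n \<and> d i \<le> 0} \<union> {i. i < n \<and> \<not> d i \<le> 0} = {..<n}" by auto
    finally show ?thesis by simp
  qed
  ultimately show ?thesis using num by simp
qed

lemma adj_matrix_carrier: "adj_matrix m E \<in> carrier_mat m m"
  by (simp add: adj_matrix_def)

lemma adj_matrix_symmetric:
  assumes "simple_graph m E"
  shows "transpose_mat (adj_matrix m E) = adj_matrix m E"
  using assms by (intro eq_matI) (auto simp: adj_matrix_def simple_graph_def)

lemma adjacency_quadratic_form:
  "vec m g \<bullet> (adj_matrix m E *\<^sub>v vec m g) = (\<Sum>i<m. \<Sum>j<m. of_bool (E i j) * g i * g j)"
proof -
  have "vec m g \<bullet> (adj_matrix m E *\<^sub>v vec m g) = (\<Sum>i<m. vec m g $ i * (adj_matrix m E *\<^sub>v vec m g) $ i)"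
    by (rule scalar_prod_sum, rule mult_mat_vec_carrier[OF adj_matrix_carrier]) simp
  also have "\<dots> = (\<Sum>i<m. g i * (\<Sum>j<m. of_bool (E i j) * g j))"
  proof (intro sum.cong refl)
    fix i assume i: "i \<in> {..<m}"
    have "(adj_matrix m E *\<^sub>v vec m g) $ i = (\<Sum>j<m. adj_matrix m E $$ (i, j) * vec m g $ j)"
      using i by (intro mult_mat_vec_sum[OF adj_matrix_carrier]) auto
    then show "vec m g $ i * (adj_matrix m E *\<^sub>v vec m g) $ i = g i * (\<Sum>j<m. of_bool (E i j) * g j)"
      using i by (simp add: adj_matrix_def of_bool_def)
  qed
  also have "\<dots> = (\<Sum>i<m. \<Sum>j<m. of_bool (E i j) * g i * g j)"
    by (simp only: sum_distrib_left mult_ac)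
  finally show ?thesis .
qed

lemma double_sum_support:
  fixes g :: "nat \<Rightarrow> real"
  assumes S: "S \<subseteq> {..<m}" and g: "\<And>k. k \<notin> S \<Longrightarrow> g k = 0"
  shows "(\<Sum>i<m. \<Sum>j<m. h i j * g i * g j) = (\<Sum>i\<in>S. \<Sum>j\<in>S. h i j * g i * g j)"
proof -
  have fin: "finite S" using S finite_subset by blast
  have "(\<Sum>i<m. \<Sum>j<m. h i j * g i * g j) = (\<Sum>i<m. \<Sum>j\<in>S. h i j * g i * g j)"
    by (intro sum.cong refl sum.mono_neutral_right) (use S g in auto)
  also have "\<dots> = (\<Sum>i\<in>S. \<Sum>j\<in>S. h i j * g i * g j)"
    by (rule sum.mono_neutral_right) (use S g fin in auto)
  finally show ?thesis .
qed

lemma graph_nonpos_test_space: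
  fixes f1 f2 f3 :: "nat \<Rightarrow> real"
  assumes sg: "simple_graph m E"
    and indep: "\<And>c1 c2 c3. (\<forall>k<m. c1 * f1 k + c2 * f2 k + c3 * f3 k = 0) \<Longrightarrow> c1 = 0 \<and> c2 = 0 \<and> c3 = 0"
    and nonpos: "\<And>c1 c2 c3. (\<Sum>i<m. \<Sum>j<m. of_bool (E i j) * (c1 * f1 i + c2 * f2 i + c3 * f3 i)
        * (c1 * f1 j + c2 * f2 j + c3 * f3 j)) \<le> 0"
  shows "3 \<le> num_nonpos_eigenvalues (adj_matrix m E)"
proof -
  have lincomb: "c1 \<cdot>\<^sub>v vec m f1 + c2 \<cdot>\<^sub>v vec m f2 + c3 \<cdot>\<^sub>v vec m f3
      = vec m (\<lambda>k. c1 * f1 k + c2 * f2 k + c3 * f3 k)" for c1 c2 c3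
    by (intro eq_vecI) auto
  show ?thesis
  proof (rule nonpos_subspace_nonpos_eigenvalues[OF adj_matrix_carrier adj_matrix_symmetric[OF sg]])
    show "vec m f1 \<in> carrier_vec m" "vec m f2 \<in> carrier_vec m" "vec m f3 \<in> carrier_vec m" by auto
    show "c1 = 0 \<and> c2 = 0 \<and> c3 = 0"
      if "c1 \<cdot>\<^sub>v vec m f1 + c2 \<cdot>\<^sub>v vec m f2 + c3 \<cdot>\<^sub>v vec m f3 = 0\<^sub>v m" for c1 c2 c3
    proof (rule indep, intro allI impI)
      fix k assume "k < m"
      then show "c1 * f1 k + c2 * f2 k + c3 * f3 k = 0"
        using arg_cong[OF that[unfolded lincomb], of "\<lambda>v. v $ k"] by simp
    qed
    show "(c1 \<cdot>\<^sub>v vec m f1 + c2 \<cdot>\<^sub>v vec m f2 + c3 \<cdot>\<^sub>v vec m f3) \<bullet>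
        (adj_matrix m E *\<^sub>v (c1 \<cdot>\<^sub>v vec m f1 + c2 \<cdot>\<^sub>v vec m f2 + c3 \<cdot>\<^sub>v vec m f3)) \<le> 0" for c1 c2 c3
      unfolding lincomb adjacency_quadratic_form using nonpos[of c1 c2 c3] by (simp add: mult.assoc)
  qed
qed

subsection \<open>Three configurations forcing three nonpositive eigenvalues\<close>

text \<open>An independent triple: the quadratic form vanishes on functions supported on it.\<close>
lemma independent_triple_nonpos_eigenvalues:
  assumes sg: "simple_graph m E" and lt: "a < m" "b < m" "c < m"
    and dist: "a \<noteq> b" "a \<noteq> c" "b \<noteq> c"
    and indep: "\<not> E a b" "\<not> E a c" "\<not> E b c"
  shows "3 \<le> num_nonpos_eigenvalues (adj_matrix m E)"
proof (rule graph_nonpos_test_space[OF sg, of "\<lambda>k. of_bool (k = a)" "\<lambda>k. of_bool (k = b)" "\<lambda>k. of_bool (k = c)"])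
  fix c1 c2 c3 :: real
  assume "\<forall>k<m. c1 * of_bool (k = a) + c2 * of_bool (k = b) + c3 * of_bool (k = c) = 0"
  then show "c1 = 0 \<and> c2 = 0 \<and> c3 = 0"
    using lt dist spec[of _ a] spec[of _ b] spec[of _ c] by auto
next
  fix c1 c2 c3 :: real
  let ?g = "\<lambda>k. c1 * of_bool (k = a) + c2 * of_bool (k = b) + c3 * of_bool (k = c)"
  have irr: "\<not> E a a" "\<not> E b b" "\<not> E c c" using sg lt by (auto simp: simple_graph_def)
  have sym_edges: "\<not> E b a" "\<not> E c a" "\<not> E c b" using sg lt indep by (auto simp: simple_graph_def)
  have "(\<Sum>i<m. \<Sum>j<m. of_bool (E i j) * ?g i * ?g j) = (\<Sum>i\<in>{a,b,c}. \<Sum>j\<in>{a,b,c}. of_bool (E i j) * ?g i * ?g j)"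
    by (rule double_sum_support) (use lt in auto)
  also have "\<dots> = 0" using dist irr sym_edges indep by simp
  finally show "(\<Sum>i<m. \<Sum>j<m. of_bool (E i j) * ?g i * ?g j) \<le> 0" by simp
qed

lemma quadratic_form_four_vertices:
  fixes g :: "nat \<Rightarrow> real"
  assumes sg: "simple_graph m E" and lt: "a < m" "b < m" "c < m" "d < m"
    and dist: "a \<noteq> b" "a \<noteq> c" "a \<noteq> d" "b \<noteq> c" "b \<noteq> d" "c \<noteq> d"
    and g: "\<And>k. k \<notin> {a, b, c, d} \<Longrightarrow> g k = 0"
  shows "(\<Sum>i<m. \<Sum>j<m. of_bool (E i j) * g i * g j) = 2 * (of_bool (E a b) * g a * g b
     + of_bool (E a c) * g a * g c + of_bool (E a d) * g a * g d + of_bool (E b c) * g b * g c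
     + of_bool (E b d) * g b * g d + of_bool (E c d) * g c * g d)"
proof -
  have irr: "\<not> E a a" "\<not> E b b" "\<not> E c c" "\<not> E d d" using sg lt by (auto simp: simple_graph_def)
  have sym_edges: "E b a = E a b" "E c a = E a c" "E d a = E a d" "E c b = E b c" "E d b = E b d" "E d c = E c d"
    using sg lt by (auto simp: simple_graph_def)
  have "(\<Sum>i<m. \<Sum>j<m. of_bool (E i j) * g i * g j)
      = (\<Sum>i\<in>{a,b,c,d}. \<Sum>j\<in>{a,b,c,d}. of_bool (E i j) * g i * g j)"
    by (rule double_sum_support) (use lt g in auto)
  also have "\<dots> = 2 * (of_bool (E a b) * g a * g b
     + of_bool (E a c) * g a * g c + of_bool (E a d) * g a * g d + of_bool (E b c) * g b * g c
     + of_bool (E b d) * g b * g d + of_bool (E c d) * g c * g d)"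
    using dist by (simp add: irr sym_edges algebra_simps)
  finally show ?thesis .
qed

lemma isolated_triangle_nonpos_eigenvalues:
  assumes sg: "simple_graph m E" and lt: "a < m" "b < m" "c < m" "d < m"
    and dist: "a \<noteq> b" "a \<noteq> c" "a \<noteq> d" "b \<noteq> c" "b \<noteq> d" "c \<noteq> d"
    and edges: "E a b" "E a c" "E b c" "\<not> E a d" "\<not> E b d" "\<not> E c d"
  shows "3 \<le> num_nonpos_eigenvalues (adj_matrix m E)"
proof (rule graph_nonpos_test_space[OF sg, of "\<lambda>k. of_bool (k = a) - of_bool (k = c)"
      "\<lambda>k. of_bool (k = b) - of_bool (k = c)" "\<lambda>k. of_bool (k = d)"])
  fix c1 c2 c3 :: real
  assume h: "\<forall>k<m. c1 * (of_bool (k = a) - of_bool (k = c)) + c2 * (of_bool (k = b) - of_bool (k = c))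
      + c3 * of_bool (k = d) = 0"
  show "c1 = 0 \<and> c2 = 0 \<and> c3 = 0"
    using h[rule_format, OF lt(1)] h[rule_format, OF lt(2)] h[rule_format, OF lt(4)] dist by auto
next
  fix c1 c2 c3 :: real
  let ?g = "\<lambda>k. c1 * (of_bool (k = a) - of_bool (k = c)) + c2 * (of_bool (k = b) - of_bool (k = c))
      + c3 * of_bool (k = d)"
  have "?g a = c1" "?g b = c2" "?g c = - (c1 + c2)" "?g d = c3"
    using dist by auto
  then have "(\<Sum>i<m. \<Sum>j<m. of_bool (E i j) * ?g i * ?g j) = - (c1\<^sup>2 + c2\<^sup>2 + (c1 + c2)\<^sup>2)"
    using quadratic_form_four_vertices[OF sg lt dist, of ?g] edges
    by (simp add: power2_eq_square algebra_simps)
  also have "\<dots> \<le> 0"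
    using zero_le_power2[of c1] zero_le_power2[of c2] zero_le_power2[of "c1 + c2"] by linarith
  finally show "(\<Sum>i<m. \<Sum>j<m. of_bool (E i j) * ?g i * ?g j) \<le> 0" .
qed

text \<open>A (not necessarily induced) four-cycle a b c d: the test space consists of the vertex
  functions supported on the cycle with total sum zero.\<close>
lemma four_cycle_nonpos_eigenvalues:
  assumes sg: "simple_graph m E" and lt: "a < m" "b < m" "c < m" "d < m"
    and dist: "a \<noteq> b" "a \<noteq> c" "a \<noteq> d" "b \<noteq> c" "b \<noteq> d" "c \<noteq> d"
    and edges: "E a b" "E b c" "E c d" "E d a"
  shows "3 \<le> num_nonpos_eigenvalues (adj_matrix m E)"
proof (rule graph_nonpos_test_space[OF sg, of "\<lambda>k. of_bool (k = a) - of_bool (k = d)"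
      "\<lambda>k. of_bool (k = b) - of_bool (k = d)" "\<lambda>k. of_bool (k = c) - of_bool (k = d)"])
  fix c1 c2 c3 :: real
  assume h: "\<forall>k<m. c1 * (of_bool (k = a) - of_bool (k = d)) + c2 * (of_bool (k = b) - of_bool (k = d))
      + c3 * (of_bool (k = c) - of_bool (k = d)) = 0"
  show "c1 = 0 \<and> c2 = 0 \<and> c3 = 0"
    using h[rule_format, OF lt(1)] h[rule_format, OF lt(2)] h[rule_format, OF lt(3)] dist by auto
next
  fix c1 c2 c3 :: real
  let ?g = "\<lambda>k. c1 * (of_bool (k = a) - of_bool (k = d)) + c2 * (of_bool (k = b) - of_bool (k = d))
      + c3 * (of_bool (k = c) - of_bool (k = d))"
  define x :: real where "x = of_bool (E a c)"
  define y :: real where "y = of_bool (E b d)"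
  have "?g a = c1" "?g b = c2" "?g c = c3" "?g d = - (c1 + c2 + c3)"
    using dist by auto
  then have "(\<Sum>i<m. \<Sum>j<m. of_bool (E i j) * ?g i * ?g j)
      = (- (c1 + c3)\<^sup>2 + 2 * x * c1 * c3) + (- (c1 + c3)\<^sup>2 - 2 * y * c2 * (c1 + c2 + c3))"
    using quadratic_form_four_vertices[OF sg lt dist, of ?g] edges sg lt
    by (simp add: x_def y_def simple_graph_def power2_eq_square algebra_simps)
  also have "\<dots> \<le> 0"
  proof -
    have "- (c1 + c3)\<^sup>2 + 2 * x * c1 * c3 \<le> 0"
    proof (cases "E a c")
      case True
      have "- (c1 + c3)\<^sup>2 + 2 * c1 * c3 = - (c1\<^sup>2 + c3\<^sup>2)" by (simp add: power2_eq_square algebra_simps)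
      then show ?thesis using True by (simp add: x_def)
    qed (simp add: x_def)
    moreover have "- (c1 + c3)\<^sup>2 - 2 * y * c2 * (c1 + c2 + c3) \<le> 0"
    proof (cases "E b d")
      case True
      have "- (c1 + c3)\<^sup>2 - 2 * c2 * (c1 + c2 + c3) = - (c2\<^sup>2 + (c1 + c2 + c3)\<^sup>2)"
        by (simp add: power2_eq_square algebra_simps)
      then show ?thesis using True by (simp add: y_def)
    qed (simp add: y_def)
    ultimately show ?thesis by linarith
  qed
  finally show "(\<Sum>i<m. \<Sum>j<m. of_bool (E i j) * ?g i * ?g j) \<le> 0" .
qed

subsection \<open>The 5-cycle\<close>

definition pentagon :: "nat \<Rightarrow> nat \<Rightarrow> bool" where
  "pentagon i j \<longleftrightarrow> i + 1 = j \<or> j + 1 = i \<or> (i = 0 \<and> j = 4) \<or> (i = 4 \<and> j = 0)"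

lemma pentagon_simple_graph: "simple_graph 5 pentagon"
  by (auto simp: simple_graph_def pentagon_def)

text \<open>The 5-cycle has at most two nonpositive eigenvalues: its quadratic form is
  (c1 + c2)^2 + (c1 + c3)^2 + (c2 + c3)^2, hence positive definite, on the span of
  e_1 + e_2, e_0 + e_4 and e_0 + e_1 - e_3.\<close>
lemma pentagon_nonpos_eigenvalues: "num_nonpos_eigenvalues (adj_matrix 5 pentagon) \<le> 2"
proof -
  define f1 :: "nat \<Rightarrow> real" where "f1 k = of_bool (k = 1 \<or> k = 2)" for k
  define f2 :: "nat \<Rightarrow> real" where "f2 k = of_bool (k = 0 \<or> k = 4)" for k
  define f3 :: "nat \<Rightarrow> real" where "f3 k = of_bool (k = 0 \<or> k = 1) - of_bool (k = 3)" for k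
  have "num_nonpos_eigenvalues (adj_matrix 5 pentagon) + 3 \<le> 5"
  proof (rule pos_subspace_few_nonpos_eigenvalues[OF adj_matrix_carrier adj_matrix_symmetric[OF pentagon_simple_graph]])
    show "vec 5 f1 \<in> carrier_vec 5" "vec 5 f2 \<in> carrier_vec 5" "vec 5 f3 \<in> carrier_vec 5" by auto
    fix c1 c2 c3 :: real
    assume c: "\<not> (c1 = 0 \<and> c2 = 0 \<and> c3 = 0)"
    have "c1 \<cdot>\<^sub>v vec 5 f1 + c2 \<cdot>\<^sub>v vec 5 f2 + c3 \<cdot>\<^sub>v vec 5 f3 = vec 5 (\<lambda>k. c1 * f1 k + c2 * f2 k + c3 * f3 k)"
      by (intro eq_vecI) auto
    moreover have "vec 5 (\<lambda>k. c1 * f1 k + c2 * f2 k + c3 * f3 k) \<bullet>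
        (adj_matrix 5 pentagon *\<^sub>v vec 5 (\<lambda>k. c1 * f1 k + c2 * f2 k + c3 * f3 k))
        = (c1 + c2)\<^sup>2 + (c1 + c3)\<^sup>2 + (c2 + c3)\<^sup>2"
      unfolding adjacency_quadratic_form
      by (simp add: numeral_eq_Suc pentagon_def f1_def f2_def f3_def power2_eq_square algebra_simps)
    moreover have "(c1 + c2)\<^sup>2 + (c1 + c3)\<^sup>2 + (c2 + c3)\<^sup>2 > 0"
    proof (rule ccontr)
      assume "\<not> ?thesis"
      then have "(c1 + c2)\<^sup>2 = 0" "(c1 + c3)\<^sup>2 = 0" "(c2 + c3)\<^sup>2 = 0"
        using zero_le_power2[of "c1 + c2"] zero_le_power2[of "c1 + c3"] zero_le_power2[of "c2 + c3"]
        by linarith+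
      then have "c1 + c2 = 0" "c1 + c3 = 0" "c2 + c3 = 0" by simp_all
      then show False using c by simp
    qed
    ultimately show "(c1 \<cdot>\<^sub>v vec 5 f1 + c2 \<cdot>\<^sub>v vec 5 f2 + c3 \<cdot>\<^sub>v vec 5 f3) \<bullet>
        (adj_matrix 5 pentagon *\<^sub>v (c1 \<cdot>\<^sub>v vec 5 f1 + c2 \<cdot>\<^sub>v vec 5 f2 + c3 \<cdot>\<^sub>v vec 5 f3)) > 0"
      by simp
  qed
  then show ?thesis by simp
qed

subsection \<open>Graphs on six vertices\<close>

definition independent_triple :: "(nat \<Rightarrow> nat \<Rightarrow> bool) \<Rightarrow> nat \<Rightarrow> nat \<Rightarrow> nat \<Rightarrow> bool" where
  "independent_triple E a b c \<longleftrightarrow> \<not> E a b \<and> \<not> E a c \<and> \<not> E b c"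

definition four_cycle :: "(nat \<Rightarrow> nat \<Rightarrow> bool) \<Rightarrow> nat \<Rightarrow> nat \<Rightarrow> nat \<Rightarrow> nat \<Rightarrow> bool" where
  "four_cycle E a b c d \<longleftrightarrow> E a b \<and> E b c \<and> E c d \<and> E d a"

definition isolated_triangle :: "(nat \<Rightarrow> nat \<Rightarrow> bool) \<Rightarrow> nat \<Rightarrow> nat \<Rightarrow> nat \<Rightarrow> nat \<Rightarrow> bool" where
  "isolated_triangle E a b c d \<longleftrightarrow> E a b \<and> E a c \<and> E b c \<and> \<not> E a d \<and> \<not> E b d \<and> \<not> E c d"

text \<open>This is a
  finite check: after fixing the unordered triple a > b > c and the fourth vertex d, a SAT
  call over the fifteen possible edges settles all graphs at once.\<close>
lemma six_vertex_configuration: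
  assumes sym: "\<And>i j. i < 6 \<Longrightarrow> j < 6 \<Longrightarrow> E i j = E j i"
  shows "\<exists>a<6. \<exists>b<6. \<exists>c<6. \<exists>d<6. distinct [a, b, c, d] \<and>
    (independent_triple E a b c \<or> four_cycle E a b c d \<or> isolated_triangle E a b c d)"
proof -
  have "\<exists>a<6::nat. \<exists>b<a. \<exists>c<b. \<exists>d<6. d \<noteq> a \<and> d \<noteq> b \<and> d \<noteq> c \<and>
    (independent_triple E a b c \<or> isolated_triangle E a b c d
     \<or> four_cycle E a b c d \<or> four_cycle E a c b d \<or> four_cycle E b a c d)"
    using sym[of 1 0] sym[of 2 0] sym[of 2 1] sym[of 3 0] sym[of 3 1] sym[of 3 2] sym[of 4 0]
      sym[of 4 1] sym[of 4 2] sym[of 4 3] sym[of 5 0] sym[of 5 1] sym[of 5 2] sym[of 5 3] sym[of 5 4]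
    unfolding independent_triple_def four_cycle_def isolated_triangle_def
    by (simp add: numeral_eq_Suc Ex_less_Suc2) sat
  then obtain a b c d where lt: "a < 6" "b < a" "c < b" "d < 6" "d \<noteq> a" "d \<noteq> b" "d \<noteq> c"
    and conf: "independent_triple E a b c \<or> isolated_triangle E a b c d
     \<or> four_cycle E a b c d \<or> four_cycle E a c b d \<or> four_cycle E b a c d"
    by blast
  have "distinct [a, b, c, d]" "distinct [a, c, b, d]" "distinct [b, a, c, d]" using lt by auto
  moreover have "b < 6" "c < 6" using lt by auto
  ultimately show ?thesis using conf lt(1,4) by blast
qed

theorem six_vertices_three_nonpos_eigenvalues:
  assumes sg: "simple_graph m E" and m: "6 \<le> m"
  shows "3 \<le> num_nonpos_eigenvalues (adj_matrix m E)"
proof -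
  have "\<And>i j. i < 6 \<Longrightarrow> j < 6 \<Longrightarrow> E i j = E j i"
    using sg m by (auto simp: simple_graph_def)
  then obtain a b c d where six: "a < 6" "b < 6" "c < 6" "d < 6" "distinct [a, b, c, d]"
    and conf: "independent_triple E a b c \<or> four_cycle E a b c d \<or> isolated_triangle E a b c d"
    using six_vertex_configuration[of E] by blast
  have lt: "a < m" "b < m" "c < m" "d < m" using six(1-4) m by linarith+
  have dist: "a \<noteq> b" "a \<noteq> c" "a \<noteq> d" "b \<noteq> c" "b \<noteq> d" "c \<noteq> d" using six(5) by auto
  from conf show ?thesis
    unfolding independent_triple_def four_cycle_def isolated_triangle_def
    using independent_triple_nonpos_eigenvalues[OF sg lt(1-3) dist(1,2,4)]
      four_cycle_nonpos_eigenvalues[OF sg lt dist] isolated_triangle_nonpos_eigenvalues[OF sg lt dist]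
    by blast
qed

text \<open>The threshold is exactly six: the 5-cycle shows that five vertices do not suffice.\<close>
theorem mainTheorem6:
  shows "NPO 3 = 6"
  unfolding NPO_def
proof (rule Least_equality)
  show "\<forall>m\<ge>6. \<forall>E. simple_graph m E \<longrightarrow> 3 \<le> num_nonpos_eigenvalues (adj_matrix m E)"
    using six_vertices_three_nonpos_eigenvalues by blast
next
  fix y
  assume bound: "\<forall>m\<ge>y. \<forall>E. simple_graph m E \<longrightarrow> 3 \<le> num_nonpos_eigenvalues (adj_matrix m E)"
  show "6 \<le> y"
  proof (rule ccontr)
    assume "\<not> 6 \<le> y"
    then have "3 \<le> num_nonpos_eigenvalues (adj_matrix 5 pentagon)"
      using bound pentagon_simple_graph by simp
    then show False using pentagon_nonpos_eigenvalues by simp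
  qed
qed

end
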